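(* Let $G=(V,E)$ be a finite graph with edge weights $\mathbf{v}=(v_e)_{e\in E}$, let $q$ be an indeterminate, and let $i,j\in V$ with $i\ne j$. Then \[ Z_G(q,\mathbf{v})=\sum_{\substack{W\subseteq V\\ W\ni i,\ W\not\ni j}}\Bigl[q-1+\prod_{e\in E(W,j)}(1+v_e)\Bigr]C_{G[W]}(\mathbf{v})\,Z_{G[V\setminus W]}(q,\mathbf{v}), \] where $E(W,j)$ denotes the set of edges with one endpoint in $W$ and the other endpoint at $j$. In particular, \[ C_G(\mathbf{v})=\sum_{\substack{W\subseteq V\\ W\ni i,\ W\not\ni j}}\Bigl[\prod_{e\in E(W,j)}(1+v_e)-1\Bigr]C_{G[W]}(\mathbf{v})\,C_{G[V\setminus W]}(\mathbf{v}). \]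
   Context: Graphs may have loops and multiple edges. For a finite graph $H$: $Z_H(q,\mathbf{v})=\sum_{A\subseteq E(H)}q^{k(A)}\prod_{e\in A}v_e$ with $k(A)$ the number of connected components of $(V(H),A)$, and $C_H(\mathbf{v})=\sum_{A\subseteq E(H),\,k(A)=1}\prod_{e\in A}v_e$. $G[W]$ is the induced subgraph on $W$ (edges weighted as in $G$). *)

theory Defs
  imports Main
begin

text \<open>A finite multigraph (loops and multiple edges allowed) is given by a vertex set V,
an edge set E and an endpoint map ends: each edge e has a set ends e of one (loop)
or two endpoints in V.\<close>

definition multigraph :: "'v set \<Rightarrow> 'e set \<Rightarrow> ('e \<Rightarrow> 'v set) \<Rightarrow> bool" where
  "multigraph V E ends \<longleftrightarrow> finite V \<and> finite E \<and>
     (\<forall>e\<in>E. ends e \<subseteq> V \<and> ends e \<noteq> {} \<and> card (ends e) \<le> 2)"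

definition adj_rel :: "'v set \<Rightarrow> ('e \<Rightarrow> 'v set) \<Rightarrow> 'e set \<Rightarrow> ('v \<times> 'v) set" where
  "adj_rel V ends A = {(x, y). x \<in> V \<and> y \<in> V \<and> (\<exists>e\<in>A. x \<in> ends e \<and> y \<in> ends e)}"

definition ncomp :: "'v set \<Rightarrow> ('e \<Rightarrow> 'v set) \<Rightarrow> 'e set \<Rightarrow> nat" where
  "ncomp V ends A = card (V // ((adj_rel V ends A)\<^sup>* \<inter> (V \<times> V)))"

definition Zpoly :: "'v set \<Rightarrow> 'e set \<Rightarrow> ('e \<Rightarrow> 'v set) \<Rightarrow> 'a::comm_ring_1 \<Rightarrow> ('e \<Rightarrow> 'a) \<Rightarrow> 'a" where
  "Zpoly V E ends q w = (\<Sum>A\<in>Pow E. q ^ ncomp V ends A * (\<Prod>e\<in>A. w e))"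

definition Cpoly :: "'v set \<Rightarrow> 'e set \<Rightarrow> ('e \<Rightarrow> 'v set) \<Rightarrow> ('e \<Rightarrow> 'a::comm_ring_1) \<Rightarrow> 'a" where
  "Cpoly V E ends w = (\<Sum>A\<in>{A\<in>Pow E. ncomp V ends A = 1}. \<Prod>e\<in>A. w e)"

definition ind_edges :: "'e set \<Rightarrow> ('e \<Rightarrow> 'v set) \<Rightarrow> 'v set \<Rightarrow> 'e set" where
  "ind_edges E ends W = {e\<in>E. ends e \<subseteq> W}"

definition cross_edges :: "'e set \<Rightarrow> ('e \<Rightarrow> 'v set) \<Rightarrow> 'v set \<Rightarrow> 'v \<Rightarrow> 'e set" where
  "cross_edges E ends W j = {e\<in>E. \<exists>w\<in>W. ends e = {w, j}}"

end

theory Submission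
  imports Defs
begin

text \<open>Classify the edge sets A \<subseteq> E by the vertex set W of the component of i in (V - {j}, A).
  For fixed W, A splits uniquely as A1 \<union> A2 \<union> A3 with A1 a connected spanning edge set of G[W],
  A2 \<subseteq> E(W,j) arbitrary and A3 \<subseteq> E(G[V - W]) arbitrary; the components of A are those of A3 on
  V - W, plus W itself when A2 = {} (otherwise W is glued to the component of j). Hence every
  weight \<phi> of the number of components with \<phi>(k+1) = c \<phi>(k) for k \<ge> 1 factors blockwise; the
  factor of A2 is c - 1 + \<Prod>(1 + v_e). Taking \<phi>(k) = q^k, c = q gives the formula for Z, and
  \<phi>(k) = [k = 1], c = 0 the formula for C.\<close>

lemma adj_rel_sym: "sym (adj_rel V ends A)"
  unfolding adj_rel_def sym_def by auto

lemma adj_rel_subset: "adj_rel V ends A \<subseteq> V \<times> V"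
  unfolding adj_rel_def by auto

lemma adj_rel_mono: "V \<subseteq> V' \<Longrightarrow> A \<subseteq> A' \<Longrightarrow> adj_rel V ends A \<subseteq> adj_rel V' ends A'"
  unfolding adj_rel_def by blast

lemma adj_relI:
  "x \<in> V \<Longrightarrow> y \<in> V \<Longrightarrow> e \<in> A \<Longrightarrow> x \<in> ends e \<Longrightarrow> y \<in> ends e \<Longrightarrow> (x, y) \<in> adj_rel V ends A"
  unfolding adj_rel_def by blast

lemma adj_relE:
  assumes "(x, y) \<in> adj_rel V ends A"
  obtains e where "x \<in> V" "y \<in> V" "e \<in> A" "x \<in> ends e" "y \<in> ends e"
  using assms unfolding adj_rel_def by blast

lemma rtrancl_adj_rel_sym:
  "(x, y) \<in> (adj_rel V ends A)\<^sup>* \<Longrightarrow> (y, x) \<in> (adj_rel V ends A)\<^sup>*"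
  using sym_rtrancl[OF adj_rel_sym[of V ends A]] unfolding sym_def by blast

lemma rtrancl_adj_rel_mono:
  "V \<subseteq> V' \<Longrightarrow> A \<subseteq> A' \<Longrightarrow> (x, y) \<in> (adj_rel V ends A)\<^sup>* \<Longrightarrow> (x, y) \<in> (adj_rel V' ends A')\<^sup>*"
  using rtrancl_mono[OF adj_rel_mono] by blast

definition connected_rel :: "'v set \<Rightarrow> ('e \<Rightarrow> 'v set) \<Rightarrow> 'e set \<Rightarrow> ('v \<times> 'v) set" where
  "connected_rel V ends A = (adj_rel V ends A)\<^sup>* \<inter> V \<times> V"

lemma equiv_connected_rel: "equiv V (connected_rel V ends A)"
proof (rule equivI)
  show "connected_rel V ends A \<subseteq> V \<times> V" "refl_on V (connected_rel V ends A)"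
    "trans (connected_rel V ends A)"
    unfolding connected_rel_def refl_on_def trans_def by auto
  show "sym (connected_rel V ends A)"
    unfolding connected_rel_def sym_def using rtrancl_adj_rel_sym[of _ _ V ends A] by blast
qed

lemma ncomp_eq_card_classes:
  "ncomp V ends A = card ((\<lambda>x. connected_rel V ends A `` {x}) ` V)"
  unfolding ncomp_def connected_rel_def quotient_def UNION_singleton_eq_range by simp

lemma connected_rel_class_eq_iff:
  "x \<in> V \<Longrightarrow> y \<in> V \<Longrightarrow>
   connected_rel V ends A `` {x} = connected_rel V ends A `` {y} \<longleftrightarrow> (x, y) \<in> (adj_rel V ends A)\<^sup>*"
  using eq_equiv_class_iff[OF equiv_connected_rel, of x V y ends A]
  unfolding connected_rel_def by auto

lemma ncomp_ge_1: "finite V \<Longrightarrow> V \<noteq> {} \<Longrightarrow> ncomp V ends A \<ge> 1"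
  unfolding ncomp_eq_card_classes by (simp add: Suc_le_eq card_gt_0_iff)

lemma ncomp_eq_1_iff:
  assumes x: "x \<in> V"
  shows "ncomp V ends A = 1 \<longleftrightarrow> (\<forall>y\<in>V. (x, y) \<in> (adj_rel V ends A)\<^sup>*)"
proof
  assume "ncomp V ends A = 1"
  then obtain c where c: "(\<lambda>x. connected_rel V ends A `` {x}) ` V = {c}"
    unfolding ncomp_eq_card_classes by (auto simp: card_Suc_eq)
  show "\<forall>y\<in>V. (x, y) \<in> (adj_rel V ends A)\<^sup>*"
  proof
    fix y assume y: "y \<in> V"
    have "connected_rel V ends A `` {x} = c" "connected_rel V ends A `` {y} = c"
      using c imageI[OF x, of "\<lambda>x. connected_rel V ends A `` {x}"]
        imageI[OF y, of "\<lambda>x. connected_rel V ends A `` {x}"] by simp_all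
    then show "(x, y) \<in> (adj_rel V ends A)\<^sup>*"
      using connected_rel_class_eq_iff[OF x y, of ends A] by simp
  qed
next
  assume reach: "\<forall>y\<in>V. (x, y) \<in> (adj_rel V ends A)\<^sup>*"
  have "connected_rel V ends A `` {z} = connected_rel V ends A `` {x}" if z: "z \<in> V" for z
    using connected_rel_class_eq_iff[OF z x, of ends A]
      rtrancl_adj_rel_sym[OF reach[rule_format, OF z]] by simp
  then have "(\<lambda>x. connected_rel V ends A `` {x}) ` V = (\<lambda>_. connected_rel V ends A `` {x}) ` V"
    by (rule image_cong[OF refl])
  also have "\<dots> = {connected_rel V ends A `` {x}}"
    using x by (rule image_constant)
  finally show "ncomp V ends A = 1"
    unfolding ncomp_eq_card_classes by simp
qed

lemma card_image_eq_if_same_kernel: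
  assumes "\<And>u u'. u \<in> U \<Longrightarrow> u' \<in> U \<Longrightarrow> f u = f u' \<longleftrightarrow> g u = g u'"
  shows "card (f ` U) = card (g ` U)"
proof -
  define h where "h y = g (inv_into U f y)" for y
  have hf: "h (f u) = g u" if "u \<in> U" for u
    unfolding h_def using assms that by (metis f_inv_into_f image_eqI inv_into_into)
  have "bij_betw h (f ` U) (g ` U)"
    unfolding bij_betw_def inj_on_def using hf assms by (auto simp: image_iff)
  then show ?thesis
    by (rule bij_betw_same_card)
qed

lemma multigraph_ends:
  "multigraph V E ends \<Longrightarrow> e \<in> E \<Longrightarrow>
   ends e \<subseteq> V \<and> ends e \<noteq> {} \<and> finite (ends e) \<and> card (ends e) \<le> 2"
  unfolding multigraph_def using finite_subset by blast

lemma card_le_2_eq_pair: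
  "finite S \<Longrightarrow> card S \<le> 2 \<Longrightarrow> x \<in> S \<Longrightarrow> y \<in> S \<Longrightarrow> x \<noteq> y \<Longrightarrow> S = {x, y}"
  by (metis card_2_iff card_seteq empty_subsetI insert_subset)

text \<open>Starting outside W, a path in A1 \<union> A2 \<union> A3 stays in V - W until it first enters W, which is
  possible only through j along an edge of A2.\<close>

lemma rtrancl_adj_rel_from_outside:
  assumes W: "W \<subseteq> V" and j: "j \<in> V" "j \<notin> W"
    and A1: "A1 \<subseteq> ind_edges E ends W" and A2: "A2 \<subseteq> cross_edges E ends W j"
    and A3: "A3 \<subseteq> ind_edges E ends (V - W)"
    and u: "u \<in> V - W" and path: "(u, y) \<in> (adj_rel V ends (A1 \<union> A2 \<union> A3))\<^sup>*"
  shows "(y \<in> V - W \<longrightarrow> (u, y) \<in> (adj_rel (V - W) ends A3)\<^sup>*) \<and>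
         (y \<in> W \<longrightarrow> (u, j) \<in> (adj_rel (V - W) ends A3)\<^sup>* \<and> A2 \<noteq> {})"
  using path
proof (induction rule: rtrancl_induct)
  case base
  then show ?case using u by auto
next
  case (step y z)
  from step.hyps(2) obtain e where
    yz: "y \<in> V" "z \<in> V" "e \<in> A1 \<union> A2 \<union> A3" "y \<in> ends e" "z \<in> ends e"
    by (rule adj_relE)
  consider "e \<in> A1" | "e \<in> A2" | "e \<in> A3" using yz(3) by blast
  then show ?case
  proof cases
    case 1
    then have "ends e \<subseteq> W" using A1 unfolding ind_edges_def by auto
    then show ?thesis using step.IH yz by auto
  next
    case 2
    then obtain w where "w \<in> W" "ends e = {w, j}"
      using A2 unfolding cross_edges_def by auto
    then show ?thesis using step.IH yz j 2 by auto
  next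
    case 3
    then have "ends e \<subseteq> V - W" using A3 unfolding ind_edges_def by auto
    then have "y \<in> V - W" "z \<in> V - W" "(y, z) \<in> adj_rel (V - W) ends A3"
      using yz 3 by (auto intro: adj_relI)
    then show ?thesis using step.IH by auto
  qed
qed

lemma card_classes_outside_block:
  assumes W: "W \<subseteq> V" and j: "j \<in> V" "j \<notin> W"
    and A1: "A1 \<subseteq> ind_edges E ends W" and A2: "A2 \<subseteq> cross_edges E ends W j"
    and A3: "A3 \<subseteq> ind_edges E ends (V - W)"
  shows "card ((\<lambda>x. connected_rel V ends (A1 \<union> A2 \<union> A3) `` {x}) ` (V - W)) = ncomp (V - W) ends A3"
  unfolding ncomp_eq_card_classes
proof (rule card_image_eq_if_same_kernel)
  fix u u' assume u: "u \<in> V - W" and u': "u' \<in> V - W"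
  have "(u, u') \<in> (adj_rel V ends (A1 \<union> A2 \<union> A3))\<^sup>* \<longleftrightarrow> (u, u') \<in> (adj_rel (V - W) ends A3)\<^sup>*"
    using rtrancl_adj_rel_from_outside[OF W j A1 A2 A3 u, of u'] u'
      rtrancl_adj_rel_mono[of "V - W" V A3 "A1 \<union> A2 \<union> A3"] by blast
  moreover have "u \<in> V" "u' \<in> V" using u u' by auto
  ultimately show "connected_rel V ends (A1 \<union> A2 \<union> A3) `` {u} = connected_rel V ends (A1 \<union> A2 \<union> A3) `` {u'}
      \<longleftrightarrow> connected_rel (V - W) ends A3 `` {u} = connected_rel (V - W) ends A3 `` {u'}"
    using connected_rel_class_eq_iff[OF u u', of ends A3]
      connected_rel_class_eq_iff[of u V u' ends "A1 \<union> A2 \<union> A3"]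
    by simp
qed

lemma ncomp_union_block:
  assumes fin: "finite V" and W: "W \<subseteq> V" and j: "j \<in> V" "j \<notin> W" and i: "i \<in> W"
    and A1: "A1 \<subseteq> ind_edges E ends W" and conn: "ncomp W ends A1 = 1"
    and A2: "A2 \<subseteq> cross_edges E ends W j"
    and A3: "A3 \<subseteq> ind_edges E ends (V - W)"
  shows "ncomp V ends (A1 \<union> A2 \<union> A3) = ncomp (V - W) ends A3 + (if A2 = {} then 1 else 0)"
proof -
  let ?A = "A1 \<union> A2 \<union> A3"
  let ?R = "adj_rel V ends ?A"
  let ?cl = "\<lambda>x. connected_rel V ends ?A `` {x}"
  have iV: "i \<in> V" using i W by auto
  have to_i: "(y, i) \<in> ?R\<^sup>*" if "y \<in> W" for y
  proof -
    have "(i, y) \<in> (adj_rel W ends A1)\<^sup>*"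
      using ncomp_eq_1_iff[OF i, of ends A1] conn that by simp
    from rtrancl_adj_rel_mono[OF W _ this, of ?A] have "(i, y) \<in> ?R\<^sup>*"
      by blast
    then show ?thesis by (rule rtrancl_adj_rel_sym)
  qed
  have "?cl y = ?cl i" if "y \<in> W" for y
    by (rule connected_rel_class_eq_iff[OF _ iV, THEN iffD2]) (use that W to_i in auto)
  then have "?cl ` W = (\<lambda>_. ?cl i) ` W"
    by (rule image_cong[OF refl])
  also have "\<dots> = {?cl i}"
    using i by (rule image_constant)
  finally have cl_W: "?cl ` W = {?cl i}" .
  have "V = W \<union> (V - W)" using W by blast
  then have "?cl ` V = ?cl ` W \<union> ?cl ` (V - W)"
    by (metis image_Un)
  then have ncomp_V: "ncomp V ends ?A = card (insert (?cl i) (?cl ` (V - W)))"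
    unfolding ncomp_eq_card_classes cl_W by simp
  show ?thesis
  proof (cases "A2 = {}")
    case True
    have "?cl i \<notin> ?cl ` (V - W)"
    proof
      assume "?cl i \<in> ?cl ` (V - W)"
      then obtain u where u: "u \<in> V - W" "?cl i = ?cl u" by (rule imageE)
      then have "(u, i) \<in> ?R\<^sup>*"
        by (intro connected_rel_class_eq_iff[OF _ iV, THEN iffD1]) auto
      then show False
        using rtrancl_adj_rel_from_outside[OF W j A1 A2 A3 u(1), of i] True i by simp
    qed
    then show ?thesis
      using ncomp_V card_classes_outside_block[OF W j A1 A2 A3] fin True by simp
  next
    case False
    then obtain e w where e: "e \<in> A2" "w \<in> W" "ends e = {w, j}"
      using A2 unfolding cross_edges_def by blast
    have "(w, j) \<in> ?R" using e W j by (intro adj_relI[of _ _ _ e]) auto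
    then have "(i, j) \<in> ?R\<^sup>*"
      using rtrancl_adj_rel_sym[OF to_i[OF e(2)]] by (rule rtrancl_into_rtrancl[rotated])
    then have "?cl i = ?cl j"
      by (rule connected_rel_class_eq_iff[OF iV j(1), THEN iffD2])
    then have "?cl i \<in> ?cl ` (V - W)"
      using j by blast
    then show ?thesis
      using ncomp_V card_classes_outside_block[OF W j A1 A2 A3] False by (simp add: insert_absorb)
  qed
qed

definition component :: "'v set \<Rightarrow> ('e \<Rightarrow> 'v set) \<Rightarrow> 'e set \<Rightarrow> 'v \<Rightarrow> 'v set" where
  "component V ends A x = (adj_rel V ends A)\<^sup>* `` {x}"

lemma component_subset:
  assumes "x \<in> V"
  shows "component V ends A x \<subseteq> V"
proof
  fix y assume "y \<in> component V ends A x"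
  then have "(x, y) \<in> (adj_rel V ends A)\<^sup>*" unfolding component_def by simp
  then show "y \<in> V"
    using assms adj_rel_subset by (induction rule: rtrancl_induct) auto
qed

lemma self_in_component: "x \<in> component V ends A x"
  unfolding component_def by simp

lemma component_eq_iff:
  assumes "x \<in> V"
  shows "component V ends A x = V \<longleftrightarrow> ncomp V ends A = 1"
  using component_subset[OF assms] ncomp_eq_1_iff[OF assms] unfolding component_def by blast

lemma component_union_block:
  assumes W: "W \<subseteq> V" and j: "j \<notin> W" and i: "i \<in> W"
    and A1: "A1 \<subseteq> ind_edges E ends W" and A2: "A2 \<subseteq> cross_edges E ends W j"
    and A3: "A3 \<subseteq> ind_edges E ends (V - W)"
  shows "component (V - {j}) ends (A1 \<union> A2 \<union> A3) i = component W ends A1 i"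
proof
  show "component W ends A1 i \<subseteq> component (V - {j}) ends (A1 \<union> A2 \<union> A3) i"
    unfolding component_def using rtrancl_adj_rel_mono[of W "V - {j}" A1] W j by blast
  have "y \<in> W \<and> (i, y) \<in> (adj_rel W ends A1)\<^sup>*"
    if "(i, y) \<in> (adj_rel (V - {j}) ends (A1 \<union> A2 \<union> A3))\<^sup>*" for y
    using that
  proof (induction rule: rtrancl_induct)
    case base
    then show ?case using i by simp
  next
    case (step y z)
    then have y: "y \<in> W" "(i, y) \<in> (adj_rel W ends A1)\<^sup>*" by auto
    from step.hyps(2) obtain e where
      e: "z \<noteq> j" "y \<noteq> j" "e \<in> A1 \<union> A2 \<union> A3" "y \<in> ends e" "z \<in> ends e"
      by (rule adj_relE) auto
    consider "e \<in> A1" | "e \<in> A2" | "e \<in> A3" using e(3) by blast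
    then show ?case
    proof cases
      case 1
      then have "z \<in> W" "(y, z) \<in> adj_rel W ends A1"
        using A1 e y unfolding ind_edges_def by (auto intro: adj_relI)
      then show ?thesis using y by auto
    next
      case 2
      then have "y = z" using A2 e unfolding cross_edges_def by auto
      then show ?thesis using y by simp
    next
      case 3
      then show ?thesis using A3 e y unfolding ind_edges_def by auto
    qed
  qed
  then show "component (V - {j}) ends (A1 \<union> A2 \<union> A3) i \<subseteq> component W ends A1 i"
    unfolding component_def by auto
qed

lemma subset_block_edges_if_component:
  assumes mg: "multigraph V E ends" and A: "A \<subseteq> E" and i: "i \<in> V - {j}"
    and W: "component (V - {j}) ends A i = W"
  shows "A \<subseteq> ind_edges E ends W \<union> cross_edges E ends W j \<union> ind_edges E ends (V - W)"
proof
  fix e assume e: "e \<in> A"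
  with A have eE: "e \<in> E" by auto
  note ends = multigraph_ends[OF mg eE]
  show "e \<in> ind_edges E ends W \<union> cross_edges E ends W j \<union> ind_edges E ends (V - W)"
  proof (cases "ends e \<inter> W = {}")
    case True
    then show ?thesis using ends eE unfolding ind_edges_def by auto
  next
    case False
    then obtain x where x: "x \<in> ends e" "x \<in> W" by auto
    have W_sub: "W \<subseteq> V - {j}" using W component_subset[OF i] by blast
    then have xV: "x \<in> V - {j}" using x by blast
    have "ends e \<subseteq> W \<union> {j}"
    proof
      fix y assume y: "y \<in> ends e"
      show "y \<in> W \<union> {j}"
      proof (cases "y = j")
        case False
        then have "(x, y) \<in> adj_rel (V - {j}) ends A"
          using xV x y ends e by (intro adj_relI[of _ _ _ e]) auto
        then show ?thesis using x W unfolding component_def by (auto intro: rtrancl_into_rtrancl)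
      qed simp
    qed
    moreover have "j \<notin> W" using W_sub by blast
    moreover have "ends e = {x, j}" if "j \<in> ends e"
      using card_le_2_eq_pair[of "ends e" x j] ends x that \<open>j \<notin> W\<close> by auto
    ultimately show ?thesis using x eE unfolding ind_edges_def cross_edges_def by auto
  qed
qed

lemma component_eq_iff_block:
  assumes mg: "multigraph V E ends" and A: "A \<subseteq> E"
    and W: "W \<subseteq> V" and i: "i \<in> W" and j: "j \<in> V" "j \<notin> W"
  shows "component (V - {j}) ends A i = W \<longleftrightarrow>
    A \<subseteq> ind_edges E ends W \<union> cross_edges E ends W j \<union> ind_edges E ends (V - W) \<and>
    ncomp W ends (A \<inter> ind_edges E ends W) = 1"
proof -
  have component_split: "component (V - {j}) ends A i = component W ends (A \<inter> ind_edges E ends W) i"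
    if "A \<subseteq> ind_edges E ends W \<union> cross_edges E ends W j \<union> ind_edges E ends (V - W)"
  proof -
    have "A = (A \<inter> ind_edges E ends W) \<union> (A \<inter> cross_edges E ends W j) \<union> (A \<inter> ind_edges E ends (V - W))"
      using that by blast
    then show ?thesis
      using component_union_block[OF W j(2) i, of "A \<inter> ind_edges E ends W" E ends] by (metis Int_lower2)
  qed
  have iVj: "i \<in> V - {j}" using i W j by auto
  show ?thesis
    using subset_block_edges_if_component[OF mg A iVj] component_split component_eq_iff[OF i]
    by blast
qed

lemma sum_Pow_prod:
  fixes w :: "'e \<Rightarrow> 'a::comm_semiring_1"
  shows "finite X \<Longrightarrow> (\<Sum>A\<in>Pow X. \<Prod>e\<in>A. w e) = (\<Prod>e\<in>X. 1 + w e)"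
  using prod_add[of X w "\<lambda>_. 1"] by (simp add: add.commute)

lemma sum_Pow_if_empty:
  fixes w :: "'e \<Rightarrow> 'a::comm_ring_1"
  assumes "finite X"
  shows "(\<Sum>A\<in>Pow X. (if A = {} then c else 1) * (\<Prod>e\<in>A. w e)) = c - 1 + (\<Prod>e\<in>X. 1 + w e)"
proof -
  have "(\<Sum>A\<in>Pow X. (if A = {} then c else 1) * (\<Prod>e\<in>A. w e)) =
        (\<Sum>A\<in>Pow X. (\<Prod>e\<in>A. w e) + (if {} = A then c - 1 else 0))"
    by (rule sum.cong) auto
  also have "\<dots> = (\<Sum>A\<in>Pow X. \<Prod>e\<in>A. w e) + (c - 1)"
    using assms by (simp add: sum.distrib)
  finally show ?thesis
    using sum_Pow_prod[OF assms, of w] by simp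
qed

lemma sum_image_Un3:
  assumes "X \<inter> Y = {}" "X \<inter> Z = {}" "Y \<inter> Z = {}"
    and "S1 \<subseteq> Pow X" "S2 \<subseteq> Pow Y" "S3 \<subseteq> Pow Z"
  shows "(\<Sum>A\<in>(\<lambda>(A1, A2, A3). A1 \<union> A2 \<union> A3) ` (S1 \<times> S2 \<times> S3). f A) =
    (\<Sum>A1\<in>S1. \<Sum>A2\<in>S2. \<Sum>A3\<in>S3. f (A1 \<union> A2 \<union> A3))"
proof -
  have "inj_on (\<lambda>(A1, A2, A3). A1 \<union> A2 \<union> A3) (S1 \<times> S2 \<times> S3)"
  proof (rule inj_on_inverseI[where g = "\<lambda>A. (A \<inter> X, A \<inter> Y, A \<inter> Z)"])
    fix t assume t: "t \<in> S1 \<times> S2 \<times> S3"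
    obtain A1 A2 A3 where t_eq: "t = (A1, A2, A3)" by (cases t)
    have "A1 \<subseteq> X" "A2 \<subseteq> Y" "A3 \<subseteq> Z"
      using t assms(4-6) unfolding t_eq by auto
    with t_eq show "(\<lambda>A. (A \<inter> X, A \<inter> Y, A \<inter> Z)) ((\<lambda>(A1, A2, A3). A1 \<union> A2 \<union> A3) t) = t"
      using assms(1-3) by auto
  qed
  then show ?thesis
    by (simp add: sum.reindex sum.cartesian_product split_def)
qed

lemma Cpoly_eq_sum_Pow:
  assumes "finite E"
  shows "Cpoly V E ends w = (\<Sum>A\<in>Pow E. (if ncomp V ends A = 1 then 1 else 0) * (\<Prod>e\<in>A. w e))"
proof -
  have "Cpoly V E ends w = (\<Sum>A\<in>Pow E. if ncomp V ends A = 1 then \<Prod>e\<in>A. w e else 0)"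
    unfolding Cpoly_def by (rule sum.inter_filter) (use assms in simp)
  also have "\<dots> = (\<Sum>A\<in>Pow E. (if ncomp V ends A = 1 then 1 else 0) * (\<Prod>e\<in>A. w e))"
    by (rule sum.cong) auto
  finally show ?thesis .
qed

lemma block_edges_disjoint:
  assumes mg: "multigraph V E ends" and j: "j \<notin> W"
  shows "ind_edges E ends W \<inter> cross_edges E ends W j = {}"
    and "ind_edges E ends W \<inter> ind_edges E ends (V - W) = {}"
    and "cross_edges E ends W j \<inter> ind_edges E ends (V - W) = {}"
  using j multigraph_ends[OF mg] unfolding ind_edges_def cross_edges_def by fastforce+

lemma edge_sets_with_component:
  assumes mg: "multigraph V E ends" and W: "W \<subseteq> V" and i: "i \<in> W" and j: "j \<in> V" "j \<notin> W"
  shows "{A \<in> Pow E. component (V - {j}) ends A i = W} =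
    (\<lambda>(A1, A2, A3). A1 \<union> A2 \<union> A3) ` ({A1 \<in> Pow (ind_edges E ends W). ncomp W ends A1 = 1} \<times>
      Pow (cross_edges E ends W j) \<times> Pow (ind_edges E ends (V - W)))"
    (is "_ = ?F ` (?S1 \<times> Pow ?Ec \<times> Pow ?Eo)")
proof (intro equalityI subsetI)
  let ?Ein = "ind_edges E ends W"
  fix A assume "A \<in> {A \<in> Pow E. component (V - {j}) ends A i = W}"
  then have "A \<subseteq> ?Ein \<union> ?Ec \<union> ?Eo" "ncomp W ends (A \<inter> ?Ein) = 1"
    using component_eq_iff_block[OF mg _ W i j] by auto
  then have "A = ?F (A \<inter> ?Ein, A \<inter> ?Ec, A \<inter> ?Eo)" "(A \<inter> ?Ein, A \<inter> ?Ec, A \<inter> ?Eo) \<in> ?S1 \<times> Pow ?Ec \<times> Pow ?Eo"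
    by auto
  then show "A \<in> ?F ` (?S1 \<times> Pow ?Ec \<times> Pow ?Eo)" by (rule image_eqI)
next
  let ?Ein = "ind_edges E ends W"
  fix A assume "A \<in> ?F ` (?S1 \<times> Pow ?Ec \<times> Pow ?Eo)"
  then obtain A1 A2 A3 where A: "A = A1 \<union> A2 \<union> A3" and
    A1: "A1 \<subseteq> ?Ein" "ncomp W ends A1 = 1" and A23: "A2 \<subseteq> ?Ec" "A3 \<subseteq> ?Eo"
    by auto
  have "A \<subseteq> E" using A A1 A23 unfolding ind_edges_def cross_edges_def by auto
  moreover have "A \<inter> ?Ein = A1" using A A1 A23 block_edges_disjoint[OF mg j(2)] by auto
  ultimately show "A \<in> {A \<in> Pow E. component (V - {j}) ends A i = W}"
    using component_eq_iff_block[OF mg _ W i j] A A1 A23 by auto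
qed

lemma sum_component_block:
  fixes \<phi> :: "nat \<Rightarrow> 'a::comm_ring_1" and w :: "'e \<Rightarrow> 'a"
  assumes mg: "multigraph V E ends" and W: "W \<subseteq> V" and i: "i \<in> W" and j: "j \<in> V" "j \<notin> W"
    and shift: "\<And>k. 1 \<le> k \<Longrightarrow> \<phi> (Suc k) = c * \<phi> k"
  shows "(\<Sum>A | A \<in> Pow E \<and> component (V - {j}) ends A i = W. \<phi> (ncomp V ends A) * (\<Prod>e\<in>A. w e)) =
    (c - 1 + (\<Prod>e\<in>cross_edges E ends W j. 1 + w e)) * Cpoly W (ind_edges E ends W) ends w *
    (\<Sum>A\<in>Pow (ind_edges E ends (V - W)). \<phi> (ncomp (V - W) ends A) * (\<Prod>e\<in>A. w e))"
proof -
  define Ein where "Ein = ind_edges E ends W"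
  define Ec where "Ec = cross_edges E ends W j"
  define Eo where "Eo = ind_edges E ends (V - W)"
  define S1 where "S1 = {A1 \<in> Pow Ein. ncomp W ends A1 = 1}"
  have finV: "finite V" and finE: "finite E" using mg unfolding multigraph_def by auto
  have "Ein \<subseteq> E" "Ec \<subseteq> E" "Eo \<subseteq> E"
    unfolding Ein_def Ec_def Eo_def ind_edges_def cross_edges_def by auto
  then have fin: "finite Ein" "finite Ec" "finite Eo" using finE by (auto intro: finite_subset)
  note disj = block_edges_disjoint[OF mg j(2), folded Ein_def Ec_def Eo_def]
  have summand: "\<phi> (ncomp V ends (A1 \<union> A2 \<union> A3)) * (\<Prod>e\<in>A1 \<union> A2 \<union> A3. w e) =
      (\<Prod>e\<in>A1. w e) * (((if A2 = {} then c else 1) * (\<Prod>e\<in>A2. w e)) *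
      (\<phi> (ncomp (V - W) ends A3) * (\<Prod>e\<in>A3. w e)))"
    if A1: "A1 \<in> S1" and A2: "A2 \<subseteq> Ec" and A3: "A3 \<subseteq> Eo" for A1 A2 A3
  proof -
    have "ncomp V ends (A1 \<union> A2 \<union> A3) = ncomp (V - W) ends A3 + (if A2 = {} then 1 else 0)"
      using A1 A2 A3 unfolding S1_def Ein_def Ec_def Eo_def
      by (intro ncomp_union_block[OF finV W j i]) auto
    moreover have "ncomp (V - W) ends A3 \<ge> 1"
      using finV j by (intro ncomp_ge_1) auto
    ultimately have "\<phi> (ncomp V ends (A1 \<union> A2 \<union> A3)) =
        (if A2 = {} then c else 1) * \<phi> (ncomp (V - W) ends A3)"
      using shift by simp
    moreover have "(\<Prod>e\<in>A1 \<union> A2 \<union> A3. w e) = (\<Prod>e\<in>A1. w e) * (\<Prod>e\<in>A2. w e) * (\<Prod>e\<in>A3. w e)"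
      using A1 A2 A3 fin disj unfolding S1_def
      by (subst prod.union_disjoint; auto intro: finite_subset simp: prod.union_disjoint)+
    ultimately show ?thesis by (simp add: mult_ac)
  qed
  have "(\<Sum>A | A \<in> Pow E \<and> component (V - {j}) ends A i = W. \<phi> (ncomp V ends A) * (\<Prod>e\<in>A. w e)) =
    (\<Sum>A1\<in>S1. \<Sum>A2\<in>Pow Ec. \<Sum>A3\<in>Pow Eo. (\<Prod>e\<in>A1. w e) *
      (((if A2 = {} then c else 1) * (\<Prod>e\<in>A2. w e)) * (\<phi> (ncomp (V - W) ends A3) * (\<Prod>e\<in>A3. w e))))"
    unfolding edge_sets_with_component[OF mg W i j] using disj
    by (subst sum_image_Un3[where X = Ein and Y = Ec and Z = Eo])
      (auto simp: S1_def Ein_def Ec_def Eo_def summand)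
  also have "\<dots> = (\<Sum>A1\<in>S1. \<Prod>e\<in>A1. w e) * ((\<Sum>A2\<in>Pow Ec. (if A2 = {} then c else 1) * (\<Prod>e\<in>A2. w e)) *
      (\<Sum>A3\<in>Pow Eo. \<phi> (ncomp (V - W) ends A3) * (\<Prod>e\<in>A3. w e)))"
    by (simp only: sum_product) (simp only: sum_distrib_left)
  also have "\<dots> = Cpoly W Ein ends w * (c - 1 + (\<Prod>e\<in>Ec. 1 + w e)) *
      (\<Sum>A3\<in>Pow Eo. \<phi> (ncomp (V - W) ends A3) * (\<Prod>e\<in>A3. w e))"
    unfolding Cpoly_def S1_def sum_Pow_if_empty[OF fin(2)] by simp
  finally show ?thesis
    unfolding Ein_def Ec_def Eo_def by (simp add: mult_ac)
qed

lemma sum_ncomp_weight_split: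
  fixes \<phi> :: "nat \<Rightarrow> 'a::comm_ring_1" and w :: "'e \<Rightarrow> 'a"
  assumes mg: "multigraph V E ends" and i: "i \<in> V" and j: "j \<in> V" and ij: "i \<noteq> j"
    and shift: "\<And>k. 1 \<le> k \<Longrightarrow> \<phi> (Suc k) = c * \<phi> k"
  shows "(\<Sum>A\<in>Pow E. \<phi> (ncomp V ends A) * (\<Prod>e\<in>A. w e)) =
    (\<Sum>W\<in>{W. W \<subseteq> V \<and> i \<in> W \<and> j \<notin> W}.
      (c - 1 + (\<Prod>e\<in>cross_edges E ends W j. 1 + w e)) * Cpoly W (ind_edges E ends W) ends w *
      (\<Sum>A\<in>Pow (ind_edges E ends (V - W)). \<phi> (ncomp (V - W) ends A) * (\<Prod>e\<in>A. w e)))"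
proof -
  have finV: "finite V" and finE: "finite E" using mg unfolding multigraph_def by auto
  have iVj: "i \<in> V - {j}" using i ij by simp
  have "component (V - {j}) ends A i \<in> {W. W \<subseteq> V \<and> i \<in> W \<and> j \<notin> W}" for A
    using component_subset[OF iVj, of ends A] self_in_component[of i "V - {j}" ends A] by auto
  then have "(\<lambda>A. component (V - {j}) ends A i) ` Pow E \<subseteq> {W. W \<subseteq> V \<and> i \<in> W \<and> j \<notin> W}"
    by (rule image_subsetI)
  then have "(\<Sum>A\<in>Pow E. \<phi> (ncomp V ends A) * (\<Prod>e\<in>A. w e)) =
    (\<Sum>W\<in>{W. W \<subseteq> V \<and> i \<in> W \<and> j \<notin> W}.
      \<Sum>A | A \<in> Pow E \<and> component (V - {j}) ends A i = W. \<phi> (ncomp V ends A) * (\<Prod>e\<in>A. w e))"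
    using finV finE by (intro sum.group[symmetric]) auto
  also have "\<dots> = (\<Sum>W\<in>{W. W \<subseteq> V \<and> i \<in> W \<and> j \<notin> W}.
      (c - 1 + (\<Prod>e\<in>cross_edges E ends W j. 1 + w e)) * Cpoly W (ind_edges E ends W) ends w *
      (\<Sum>A\<in>Pow (ind_edges E ends (V - W)). \<phi> (ncomp (V - W) ends A) * (\<Prod>e\<in>A. w e)))"
    using sum_component_block[where \<phi> = \<phi> and c = c, OF mg _ _ j _ shift] by (intro sum.cong) auto
  finally show ?thesis .
qed

theorem theorem4p1:
  fixes V :: "'v set" and E :: "'e set" and ends :: "'e \<Rightarrow> 'v set"
    and q :: "'a::comm_ring_1" and w :: "'e \<Rightarrow> 'a" and i j :: 'v
  assumes "multigraph V E ends" and "i \<in> V" and "j \<in> V" and "i \<noteq> j"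
  shows "(Zpoly V E ends q w =
           (\<Sum>W\<in>{W. W \<subseteq> V \<and> i \<in> W \<and> j \<notin> W}.
              (q - 1 + (\<Prod>e\<in>cross_edges E ends W j. 1 + w e))
              * Cpoly W (ind_edges E ends W) ends w
              * Zpoly (V - W) (ind_edges E ends (V - W)) ends q w)) \<and>
         (Cpoly V E ends w =
           (\<Sum>W\<in>{W. W \<subseteq> V \<and> i \<in> W \<and> j \<notin> W}.
              ((\<Prod>e\<in>cross_edges E ends W j. 1 + w e) - 1)
              * Cpoly W (ind_edges E ends W) ends w
              * Cpoly (V - W) (ind_edges E ends (V - W)) ends w))"
proof
  show "Zpoly V E ends q w = (\<Sum>W\<in>{W. W \<subseteq> V \<and> i \<in> W \<and> j \<notin> W}.
      (q - 1 + (\<Prod>e\<in>cross_edges E ends W j. 1 + w e)) * Cpoly W (ind_edges E ends W) ends w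
      * Zpoly (V - W) (ind_edges E ends (V - W)) ends q w)"
    unfolding Zpoly_def by (rule sum_ncomp_weight_split[OF assms]) simp
next
  have finE: "finite E" using assms(1) unfolding multigraph_def by simp
  have "Cpoly V E ends w = (\<Sum>W\<in>{W. W \<subseteq> V \<and> i \<in> W \<and> j \<notin> W}.
      (0 - 1 + (\<Prod>e\<in>cross_edges E ends W j. 1 + w e)) * Cpoly W (ind_edges E ends W) ends w *
      (\<Sum>A\<in>Pow (ind_edges E ends (V - W)). (if ncomp (V - W) ends A = 1 then 1 else 0) * (\<Prod>e\<in>A. w e)))"
    unfolding Cpoly_eq_sum_Pow[OF finE] by (rule sum_ncomp_weight_split[OF assms]) simp
  also have "\<dots> = (\<Sum>W\<in>{W. W \<subseteq> V \<and> i \<in> W \<and> j \<notin> W}.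
      ((\<Prod>e\<in>cross_edges E ends W j. 1 + w e) - 1) * Cpoly W (ind_edges E ends W) ends w *
      Cpoly (V - W) (ind_edges E ends (V - W)) ends w)"
    using finE by (simp add: Cpoly_eq_sum_Pow ind_edges_def)
  finally show "Cpoly V E ends w = \<dots>" .
qed

end
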